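(* Let $a>1$, $\hbar>0$, $p\in\mathbb{R}^d$, and $C_k(n,a)=\binom{n}{k}\left(\frac{1+a}{2}\right)^{n-k}\left(\frac{1-a}{2}\right)^k$. Then: (a) The sequence $F_n(x)=\sum_{k=0}^n C_k(n,a)\exp\bigl[\frac{ip\cdot x}{\hbar}(1-\frac{2k}{n})\bigr]$ converges to $F(x)=e^{iap\cdot x/\hbar}$ for every $x\in\mathbb{R}^d$, uniformly on compact subsets of $\mathbb{R}^d$. (b) If $q$ is an even positive integer, the sequence $Y_n(x)=\sum_{k=0}^n C_k(n,a)\exp\bigl[\frac{ip\cdot x}{\hbar}(-i)^q(1-\frac{2k}{n})^q\bigr]$ converges to $Y(x)=e^{ip\cdot x(-ia)^q/\hbar}$ for every $x\in\mathbb{R}^d$, uniformly on compact subsets of $\mathbb{R}^d$. (c) If $q$ is an odd positive integer, the sequence $Z_n(x)=\sum_{k=0}^n C_k(n,a)\exp\bigl[\frac{p\cdot x}{\hbar}(-i)^q(1-\frac{2k}{n})^q\bigr]$ converges to $Z(x)=e^{p\cdot x(-ia)^q/\hbar}$ for every $x\in\mathbb{R}^d$, uniformly on compact subsets of $\mathbb{R}^d$. *)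

theory Defs
  imports "HOL-Analysis.Analysis"
begin

definition Ccoef :: "nat \<Rightarrow> nat \<Rightarrow> real \<Rightarrow> real" where
  "Ccoef k n a = real (n choose k) * ((1 + a) / 2) ^ (n - k) * ((1 - a) / 2) ^ k"

end

theory Submission
  imports Defs
begin

text \<open>Each sum has the form \<open>\<Sum>\<^sub>k C\<^sub>k(n,a) exp (z (1 - 2k/n)^q)\<close> with \<open>z\<close> proportional
  to \<open>p \<bullet> x\<close>, so it ranges over a bounded set when \<open>x\<close> ranges over a compact set. Expanding the
  exponential turns it into a power series in \<open>z\<close> whose \<open>m\<close>-th coefficient involves the
  scaled moment \<open>\<Sum>\<^sub>k C\<^sub>k(n,a) (1 - 2k/n)^(q m)\<close> where the limit \<open>exp (z a^q)\<close> has
  \<open>a^(q m)\<close>. The unscaled moments \<open>\<Sum>\<^sub>k C\<^sub>k(n,a) (n - 2k)^j\<close> are the derivatives at \<open>0\<close>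
  of \<open>(cosh t + a sinh t)^n\<close>, a series squeezed coefficientwise between \<open>0\<close> and \<open>exp (a n t)\<close>.
  So the scaled moments lie in \<open>[0, a^j]\<close>, and a recursion in \<open>n\<close> shows that they differ from
  \<open>a^j\<close> by \<open>O(1/n)\<close>. Tannery's theorem, with the majorant \<open>\<Sum>\<^sub>m R^m a^(q m) / m!\<close>, then
  gives convergence uniformly for \<open>|z| \<le> R\<close>.\<close>

definition Csum :: "real \<Rightarrow> nat \<Rightarrow> (nat \<Rightarrow> real) \<Rightarrow> real" where
  "Csum a n h = (\<Sum>k\<le>n. Ccoef k n a * h k)"

lemma Ccoef_0_Suc: "Ccoef 0 (Suc n) a = (1 + a) / 2 * Ccoef 0 n a"
  by (simp add: Ccoef_def)

lemma Ccoef_Suc_Suc: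
  assumes "k \<le> n"
  shows "Ccoef (Suc k) (Suc n) a = (1 + a) / 2 * Ccoef (Suc k) n a + (1 - a) / 2 * Ccoef k n a"
proof (cases "k = n")
  case True
  then show ?thesis by (simp add: Ccoef_def)
next
  case False
  with assms have "n - k = Suc (n - Suc k)" by simp
  then have "real (Suc n choose Suc k) * x ^ (Suc n - Suc k) * y ^ Suc k
      = x * (real (n choose Suc k) * x ^ (n - Suc k) * y ^ Suc k)
        + y * (real (n choose k) * x ^ (n - k) * y ^ k)" for x y :: real
    by (simp only: binomial_Suc_Suc diff_Suc_Suc of_nat_add power_Suc) (simp add: algebra_simps)
  then show ?thesis unfolding Ccoef_def .
qed

lemma Ccoef_Suc_self: "Ccoef (Suc n) n a = 0"
  by (simp add: Ccoef_def)

lemma Csum_Suc: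
  "Csum a (Suc n) h = (1 + a) / 2 * Csum a n h + (1 - a) / 2 * Csum a n (\<lambda>k. h (Suc k))"
proof -
  have shift: "Ccoef 0 n a * h 0 + (\<Sum>k\<le>n. Ccoef (Suc k) n a * h (Suc k)) = Csum a n h"
    using sum.atMost_Suc_shift[of "\<lambda>k. Ccoef k n a * h k" n] by (simp add: Csum_def Ccoef_Suc_self)
  have "Csum a (Suc n) h = Ccoef 0 (Suc n) a * h 0 + (\<Sum>k\<le>n. Ccoef (Suc k) (Suc n) a * h (Suc k))"
    unfolding Csum_def by (subst sum.atMost_Suc_shift) simp
  also have "\<dots> = (1 + a) / 2 * (Ccoef 0 n a * h 0 + (\<Sum>k\<le>n. Ccoef (Suc k) n a * h (Suc k)))
       + (1 - a) / 2 * (\<Sum>k\<le>n. Ccoef k n a * h (Suc k))"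
    by (simp add: Ccoef_0_Suc Ccoef_Suc_Suc algebra_simps sum.distrib sum_distrib_left)
  finally show ?thesis by (simp add: shift Csum_def)
qed

lemma Csum_sum: "Csum a n (\<lambda>k. \<Sum>i\<in>I. f i k) = (\<Sum>i\<in>I. Csum a n (f i))"
  unfolding Csum_def by (simp add: sum_distrib_left sum.swap[of _ I])

lemma Csum_cmult: "Csum a n (\<lambda>k. c * f k) = c * Csum a n f"
  unfolding Csum_def by (simp add: sum_distrib_left algebra_simps)

definition Cmoment :: "real \<Rightarrow> nat \<Rightarrow> nat \<Rightarrow> real" where
  "Cmoment a n j = Csum a n (\<lambda>k. (real n - 2 * real k) ^ j)"

text \<open>The derivatives at \<open>0\<close> of \<open>cosh t + a sinh t\<close>, the moment generating function of one
  step; those of \<open>exp (a t)\<close> dominate them when \<open>a \<ge> 1\<close>.\<close>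
definition cosh_sinh_coeff :: "real \<Rightarrow> nat \<Rightarrow> real" where
  "cosh_sinh_coeff a m = (if even m then 1 else a)"

lemma cosh_sinh_coeff_nonneg: "a \<ge> 1 \<Longrightarrow> 0 \<le> cosh_sinh_coeff a m"
  by (simp add: cosh_sinh_coeff_def)

lemma cosh_sinh_coeff_le_power:
  assumes "a \<ge> 1"
  shows "cosh_sinh_coeff a m \<le> a ^ m"
proof (cases "even m")
  case False
  then have "1 \<le> m" by (cases m) auto
  then show ?thesis using power_increasing[of 1 m a] assms False by (simp add: cosh_sinh_coeff_def)
qed (simp add: cosh_sinh_coeff_def one_le_power assms)

lemma Cmoment_Suc:
  "Cmoment a (Suc n) j = (\<Sum>i\<le>j. real (j choose i) * cosh_sinh_coeff a (j - i) * Cmoment a n i)"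
proof -
  have "Cmoment a (Suc n) j = (1 + a) / 2 * Csum a n (\<lambda>k. ((real n - 2 * real k) + 1) ^ j)
        + (1 - a) / 2 * Csum a n (\<lambda>k. ((real n - 2 * real k) + (-1)) ^ j)"
    unfolding Cmoment_def Csum_Suc by (simp add: algebra_simps)
  also have "\<dots> = (1 + a) / 2 * (\<Sum>i\<le>j. real (j choose i) * Cmoment a n i)
        + (1 - a) / 2 * (\<Sum>i\<le>j. real (j choose i) * (-1) ^ (j - i) * Cmoment a n i)"
    unfolding binomial_ring Csum_sum
    by (simp add: Cmoment_def Csum_cmult mult.assoc mult.left_commute[of "(-1)^_"]
        mult.commute[of _ "(-1)^_"])
  also have "\<dots> = (\<Sum>i\<le>j. real (j choose i) * cosh_sinh_coeff a (j - i) * Cmoment a n i)"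
    unfolding sum_distrib_left sum.distrib[symmetric]
    by (rule sum.cong) (auto simp: cosh_sinh_coeff_def field_simps)
  finally show ?thesis .
qed

lemma Cmoment_0: "Cmoment a 0 j = 0 ^ j"
  by (simp add: Cmoment_def Csum_def Ccoef_def)

lemma Cmoment_bounds:
  assumes "a \<ge> 1"
  shows "0 \<le> Cmoment a n j \<and> Cmoment a n j \<le> (a * real n) ^ j"
proof (induction n arbitrary: j)
  case 0
  then show ?case by (simp add: Cmoment_0)
next
  case (Suc n)
  have "0 \<le> Cmoment a (Suc n) j"
    unfolding Cmoment_Suc using Suc assms
    by (intro sum_nonneg mult_nonneg_nonneg cosh_sinh_coeff_nonneg) auto
  moreover have "Cmoment a (Suc n) j \<le> (\<Sum>i\<le>j. real (j choose i) * (a * real n) ^ i * a ^ (j - i))"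
    unfolding Cmoment_Suc
  proof (rule sum_mono)
    fix i
    have "cosh_sinh_coeff a (j - i) * Cmoment a n i \<le> a ^ (j - i) * (a * real n) ^ i"
      using Suc assms cosh_sinh_coeff_le_power cosh_sinh_coeff_nonneg by (intro mult_mono) auto
    then show "real (j choose i) * cosh_sinh_coeff a (j - i) * Cmoment a n i
        \<le> real (j choose i) * (a * real n) ^ i * a ^ (j - i)"
      by (simp add: ac_simps mult_left_mono)
  qed
  moreover have "(\<Sum>i\<le>j. real (j choose i) * (a * real n) ^ i * a ^ (j - i)) = (a * real (Suc n)) ^ j"
    by (simp add: binomial_ring[of "a * real n" a, symmetric] distrib_left add.commute)
  ultimately show ?case by simp
qed

lemma Cmoment_zero_exponent: "Cmoment a n 0 = 1"
  by (induction n) (simp_all add: Cmoment_0 Cmoment_Suc cosh_sinh_coeff_def)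

lemma Cmoment_one_exponent: "Cmoment a n 1 = a * real n"
  by (induction n) (simp_all add: Cmoment_0 Cmoment_Suc cosh_sinh_coeff_def Cmoment_zero_exponent algebra_simps)

definition Cmoment_defect :: "real \<Rightarrow> nat \<Rightarrow> nat \<Rightarrow> real" where
  "Cmoment_defect a n j = (a * real n) ^ j - Cmoment a n j"

lemma Cmoment_defect_nonneg: "a \<ge> 1 \<Longrightarrow> 0 \<le> Cmoment_defect a n j"
  using Cmoment_bounds[of a n j] by (simp add: Cmoment_defect_def)

lemma Cmoment_defect_Suc:
  "Cmoment_defect a (Suc n) j = (\<Sum>i\<le>j. real (j choose i) *
     ((a ^ (j - i) - cosh_sinh_coeff a (j - i)) * (a * real n) ^ i
      + cosh_sinh_coeff a (j - i) * Cmoment_defect a n i))"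
proof -
  have binom: "(a * real (Suc n)) ^ j = (\<Sum>i\<le>j. real (j choose i) * (a * real n) ^ i * a ^ (j - i))"
    by (simp add: binomial_ring[of "a * real n" a, symmetric] distrib_left add.commute)
  show ?thesis unfolding Cmoment_defect_def Cmoment_Suc binom sum_subtractf[symmetric]
    by (rule sum.cong) (simp_all add: algebra_simps)
qed

text \<open>The summand \<open>i = j - 1\<close> vanishes because \<open>cosh_sinh_coeff a 1 = a\<close>; this is what
  makes the defect one order lower than \<open>n ^ j\<close>.\<close>
lemma cosh_sinh_coeff_gap_le:
  assumes a: "a \<ge> 1" and ij: "i < j"
  shows "(a ^ (j - i) - cosh_sinh_coeff a (j - i)) * (a * real n) ^ i \<le> a ^ (2 * j) * real (Suc n) ^ (j - 2)"
proof (cases "i = j - 1")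
  case True
  with ij a show ?thesis by (simp add: cosh_sinh_coeff_def)
next
  case False
  with ij have i2: "i \<le> j - 2" by simp
  have "a ^ (j - i) - cosh_sinh_coeff a (j - i) \<le> a ^ j"
    using cosh_sinh_coeff_nonneg[OF a, of "j - i"] power_increasing[OF _ a, of "j - i" j] by simp
  moreover have "(a * real n) ^ i \<le> a ^ j * real (Suc n) ^ (j - 2)"
  proof -
    have "real n ^ i \<le> real (Suc n) ^ i" by (intro power_mono) auto
    also have "\<dots> \<le> real (Suc n) ^ (j - 2)" using i2 by (intro power_increasing) auto
    finally have "real n ^ i \<le> real (Suc n) ^ (j - 2)" .
    moreover have "a ^ i \<le> a ^ j" using ij a by (intro power_increasing) auto
    ultimately show ?thesis using a by (simp add: power_mult_distrib mult_mono)
  qed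
  moreover have "0 \<le> a ^ (j - i) - cosh_sinh_coeff a (j - i)"
    using cosh_sinh_coeff_le_power[OF a] by simp
  ultimately have "(a ^ (j - i) - cosh_sinh_coeff a (j - i)) * (a * real n) ^ i
      \<le> a ^ j * (a ^ j * real (Suc n) ^ (j - 2))"
    using a by (intro mult_mono) auto
  then show ?thesis by (simp add: power_add mult_2 mult.assoc)
qed

lemma Cmoment_defect_Suc_le:
  assumes a: "a \<ge> 1"
    and B: "\<And>i. i < j \<Longrightarrow> 0 \<le> B i \<and> Cmoment_defect a n i \<le> B i * real (Suc n) ^ (i - 1)"
  shows "Cmoment_defect a (Suc n) j \<le> Cmoment_defect a n j
           + (\<Sum>i<j. real (j choose i) * (a ^ (2 * j) + a ^ j * B i)) * real (Suc n) ^ (j - 2)"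
proof -
  have "Cmoment_defect a (Suc n) j = Cmoment_defect a n j + (\<Sum>i<j. real (j choose i) *
     ((a ^ (j - i) - cosh_sinh_coeff a (j - i)) * (a * real n) ^ i
      + cosh_sinh_coeff a (j - i) * Cmoment_defect a n i))"
    unfolding Cmoment_defect_Suc by (simp add: lessThan_Suc_atMost[symmetric] cosh_sinh_coeff_def)
  also have "\<dots> \<le> Cmoment_defect a n j
      + (\<Sum>i<j. real (j choose i) * (a ^ (2 * j) + a ^ j * B i) * real (Suc n) ^ (j - 2))"
  proof (intro add_left_mono sum_mono)
    fix i assume "i \<in> {..<j}"
    then have ij: "i < j" by simp
    have "cosh_sinh_coeff a (j - i) * Cmoment_defect a n i
        \<le> cosh_sinh_coeff a (j - i) * (B i * real (Suc n) ^ (i - 1))"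
      using B[OF ij] cosh_sinh_coeff_nonneg[OF a] by (intro mult_left_mono) auto
    also have "\<dots> \<le> a ^ j * (B i * real (Suc n) ^ (j - 2))"
    proof (rule mult_mono)
      show "cosh_sinh_coeff a (j - i) \<le> a ^ j"
        using cosh_sinh_coeff_le_power[OF a, of "j - i"] power_increasing[OF _ a, of "j - i" j] by simp
      show "B i * real (Suc n) ^ (i - 1) \<le> B i * real (Suc n) ^ (j - 2)"
        using B[OF ij] ij by (intro mult_left_mono power_increasing) auto
    qed (use a B[OF ij] in auto)
    finally have "cosh_sinh_coeff a (j - i) * Cmoment_defect a n i \<le> a ^ j * B i * real (Suc n) ^ (j - 2)"
      by (simp add: mult.assoc)
    with cosh_sinh_coeff_gap_le[OF a ij, of n]
    show "real (j choose i) * ((a ^ (j - i) - cosh_sinh_coeff a (j - i)) * (a * real n) ^ i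
          + cosh_sinh_coeff a (j - i) * Cmoment_defect a n i)
        \<le> real (j choose i) * (a ^ (2 * j) + a ^ j * B i) * real (Suc n) ^ (j - 2)"
      by (simp add: mult.assoc distrib_right mult_left_mono add_mono)
  qed
  finally show ?thesis by (simp add: sum_distrib_right)
qed

lemma growth_from_bounded_increments:
  fixes f :: "nat \<Rightarrow> real"
  assumes "f 0 \<le> 0" and "0 \<le> E" and "\<And>n. f (Suc n) \<le> f n + E * real (Suc n) ^ m"
  shows "f n \<le> E * real n * real (Suc n) ^ m"
proof (induction n)
  case (Suc n)
  have "f (Suc n) \<le> E * real (Suc n) * real (Suc n) ^ m"
    using Suc assms(3)[of n] by (simp add: algebra_simps)
  also have "\<dots> \<le> E * real (Suc n) * real (Suc (Suc n)) ^ m"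
    using assms(2) by (intro mult_left_mono power_mono) auto
  finally show ?case .
qed (use assms(1) in simp)

lemma Cmoment_defect_bound:
  assumes a: "a \<ge> 1"
  shows "\<exists>B\<ge>0. \<forall>n. Cmoment_defect a n j \<le> B * real (Suc n) ^ (j - 1)"
proof (induction j rule: less_induct)
  case (less j)
  show ?case
  proof (cases "j < 2")
    case True
    then have "j = 0 \<or> j = 1" by auto
    then have "Cmoment_defect a n j = 0" for n
      using Cmoment_zero_exponent[of a n] Cmoment_one_exponent[of a n]
      by (auto simp: Cmoment_defect_def)
    then show ?thesis by auto
  next
    case False
    obtain B where B: "\<And>i. i < j \<Longrightarrow> 0 \<le> B i \<and> (\<forall>n. Cmoment_defect a n i \<le> B i * real (Suc n) ^ (i - 1))"
      using less.IH by metis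
    define E where "E = (\<Sum>i<j. real (j choose i) * (a ^ (2 * j) + a ^ j * B i))"
    have E: "0 \<le> E" unfolding E_def using B a by (intro sum_nonneg) auto
    have "Cmoment_defect a n j \<le> E * real n * real (Suc n) ^ (j - 2)" for n
      using Cmoment_defect_Suc_le[OF a, of j B] B False E
      by (intro growth_from_bounded_increments) (auto simp: E_def Cmoment_defect_def Cmoment_0)
    also have "E * real n * real (Suc n) ^ (j - 2) \<le> E * real (Suc n) ^ (j - 1)" for n
    proof -
      have "j - 1 = Suc (j - 2)" using False by simp
      then show ?thesis using E by (simp add: mult.assoc[symmetric] mult_left_mono mult_right_mono)
    qed
    finally show ?thesis using E by blast
  qed
qed

definition Cmoment_scaled :: "real \<Rightarrow> nat \<Rightarrow> nat \<Rightarrow> real" where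
  "Cmoment_scaled a n j = Csum a n (\<lambda>k. (1 - 2 * real k / real n) ^ j)"

lemma Cmoment_scaled_eq:
  assumes "n > 0"
  shows "Cmoment_scaled a n j = Cmoment a n j / real n ^ j"
proof -
  have "(1 - 2 * real k / real n) ^ j = 1 / real n ^ j * (real n - 2 * real k) ^ j" for k
    using assms by (simp add: diff_divide_distrib power_divide[symmetric])
  then show ?thesis unfolding Cmoment_scaled_def Cmoment_def by (simp only: Csum_cmult) simp
qed

lemma Cmoment_scaled_bounds:
  "a \<ge> 1 \<Longrightarrow> n > 0 \<Longrightarrow> 0 \<le> Cmoment_scaled a n j \<and> Cmoment_scaled a n j \<le> a ^ j"
  using Cmoment_bounds[of a n j] by (auto simp: Cmoment_scaled_eq power_mult_distrib divide_le_eq)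

lemma Cmoment_defect_scaled_tendsto:
  assumes a: "a \<ge> 1"
  shows "(\<lambda>n. Cmoment_defect a n j / real n ^ j) \<longlonglongrightarrow> 0"
proof (cases "j = 0")
  case True
  then show ?thesis by (simp add: Cmoment_defect_def Cmoment_zero_exponent)
next
  case False
  obtain B where B: "\<And>n. Cmoment_defect a n j \<le> B * real (Suc n) ^ (j - 1)"
    using Cmoment_defect_bound[OF a, of j] by blast
  have "(\<lambda>n. B * (real (Suc n) / real n) ^ (j - 1) * inverse (real n)) \<longlonglongrightarrow> B * 1 ^ (j - 1) * 0"
    by (intro tendsto_mult tendsto_power tendsto_const LIMSEQ_Suc_n_over_n lim_inverse_n)
  then have majorant: "(\<lambda>n. B * (real (Suc n) / real n) ^ (j - 1) * inverse (real n)) \<longlonglongrightarrow> 0"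
    by simp
  show ?thesis
  proof (rule tendsto_sandwich[OF _ _ tendsto_const majorant])
    show "\<forall>\<^sub>F n in sequentially. 0 \<le> Cmoment_defect a n j / real n ^ j"
      using Cmoment_defect_nonneg[OF a] by simp
    show "\<forall>\<^sub>F n in sequentially.
        Cmoment_defect a n j / real n ^ j \<le> B * (real (Suc n) / real n) ^ (j - 1) * inverse (real n)"
    proof (rule eventually_sequentiallyI[of 1])
      fix n :: nat assume n: "n \<ge> 1"
      have "real n ^ j = real n ^ (j - 1) * real n"
        using False by (metis Suc_pred' bot_nat_0.not_eq_extremum power_Suc2)
      then have "B * real (Suc n) ^ (j - 1) / real n ^ j
          = B * (real (Suc n) / real n) ^ (j - 1) * inverse (real n)"
        using n by (simp add: power_divide divide_simps)
      with B[of n] n show "Cmoment_defect a n j / real n ^ j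
          \<le> B * (real (Suc n) / real n) ^ (j - 1) * inverse (real n)"
        by (metis divide_right_mono of_nat_0_le_iff zero_le_power)
    qed
  qed
qed

lemma Cmoment_scaled_tendsto:
  assumes a: "a \<ge> 1"
  shows "(\<lambda>n. Cmoment_scaled a n j) \<longlonglongrightarrow> a ^ j"
proof -
  have "(\<lambda>n. a ^ j - Cmoment_defect a n j / real n ^ j) \<longlonglongrightarrow> a ^ j - 0"
    by (intro tendsto_diff tendsto_const Cmoment_defect_scaled_tendsto a)
  moreover have "\<forall>\<^sub>F n in sequentially. a ^ j - Cmoment_defect a n j / real n ^ j = Cmoment_scaled a n j"
    by (rule eventually_sequentiallyI[of 1])
      (simp add: Cmoment_scaled_eq Cmoment_defect_def power_mult_distrib diff_divide_distrib)
  ultimately show ?thesis by (simp add: Lim_transform_eventually)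
qed

lemma Cmoment_scaled_dist_le:
  "a \<ge> 1 \<Longrightarrow> n > 0 \<Longrightarrow> \<bar>Cmoment_scaled a n j - a ^ j\<bar> \<le> a ^ j"
  using Cmoment_scaled_bounds[of a n j] by simp

definition Cexp_sum :: "real \<Rightarrow> nat \<Rightarrow> nat \<Rightarrow> complex \<Rightarrow> complex" where
  "Cexp_sum a q n z =
     (\<Sum>k=0..n. complex_of_real (Ccoef k n a) * exp (z * complex_of_real ((1 - 2 * real k / real n) ^ q)))"

lemma Cexp_sum_sums:
  "(\<lambda>m. z ^ m / of_real (fact m) * of_real (Cmoment_scaled a n (q * m))) sums Cexp_sum a q n z"
proof -
  let ?y = "\<lambda>k. (1 - 2 * real k / real n) ^ q"
  have "(\<lambda>m. \<Sum>k\<in>{0..n}. of_real (Ccoef k n a) * ((z * of_real (?y k)) ^ m /\<^sub>R fact m))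
      sums Cexp_sum a q n z"
    unfolding Cexp_sum_def by (intro sums_sum sums_mult exp_converges)
  moreover have "(\<Sum>k\<in>{0..n}. of_real (Ccoef k n a) * ((z * of_real (?y k)) ^ m /\<^sub>R fact m))
      = z ^ m / of_real (fact m) * of_real (Cmoment_scaled a n (q * m))" for m
    by (simp add: Cmoment_scaled_def Csum_def sum_distrib_left atLeast0AtMost scaleR_conv_of_real
        power_mult_distrib power_mult[symmetric] divide_inverse ac_simps)
  ultimately show ?thesis by simp
qed

lemma exp_mult_of_real_power_sums:
  "(\<lambda>m. z ^ m / of_real (fact m) * of_real (a ^ (q * m))) sums exp (z * complex_of_real (a ^ q))"
proof -
  have "(z * of_real (a ^ q)) ^ m /\<^sub>R fact m = z ^ m / of_real (fact m) * of_real (a ^ (q * m))" for m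
    by (simp add: scaleR_conv_of_real power_mult_distrib power_mult[symmetric] divide_inverse ac_simps)
  with exp_converges[of "z * of_real (a ^ q)"] show ?thesis by simp
qed

lemma summable_exp_power_majorant: "summable (\<lambda>m. R ^ m / fact m * (a::real) ^ (q * m))"
proof -
  have "inverse (fact m) * (R * a ^ q) ^ m = R ^ m / fact m * a ^ (q * m)" for m
    by (simp add: power_mult_distrib power_mult[symmetric] divide_inverse ac_simps)
  with summable_exp[of "R * a ^ q"] show ?thesis by simp
qed

definition Cexp_error :: "real \<Rightarrow> nat \<Rightarrow> real \<Rightarrow> nat \<Rightarrow> real" where
  "Cexp_error a q R n = (\<Sum>m. R ^ m / fact m * \<bar>Cmoment_scaled a n (q * m) - a ^ (q * m)\<bar>)"

lemma Cexp_error_term_le: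
  assumes "a \<ge> 1" "n > 0" "R \<ge> 0"
  shows "norm (R ^ m / fact m * \<bar>Cmoment_scaled a n (q * m) - a ^ (q * m)\<bar>) \<le> R ^ m / fact m * a ^ (q * m)"
  using Cmoment_scaled_dist_le[OF assms(1,2), of "q * m"] assms(3)
  by (simp add: abs_mult) (intro divide_right_mono mult_left_mono, auto)

lemma Cexp_error_tendsto:
  assumes a: "a \<ge> 1" and R: "R \<ge> 0"
  shows "Cexp_error a q R \<longlonglongrightarrow> 0"
proof -
  have lim: "(\<lambda>n. R ^ m / fact m * \<bar>Cmoment_scaled a n (q * m) - a ^ (q * m)\<bar>) \<longlonglongrightarrow> 0" for m
    using tendsto_mult[OF tendsto_const tendsto_rabs[OF tendsto_diff[OF Cmoment_scaled_tendsto[OF a]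
          tendsto_const]], of "R ^ m / fact m" "q * m" "a ^ (q * m)"] by simp
  have bound: "\<forall>\<^sub>F (m, n) in at_top \<times>\<^sub>F sequentially.
      norm (R ^ m / fact m * \<bar>Cmoment_scaled a n (q * m) - a ^ (q * m)\<bar>) \<le> R ^ m / fact m * a ^ (q * m)"
    unfolding eventually_prod_filter
  proof (intro exI conjI allI impI)
    show "eventually (\<lambda>_. True) at_top" "eventually (\<lambda>n::nat. n > 0) sequentially"
      by (simp_all add: eventually_gt_at_top)
  qed (use Cexp_error_term_le[OF a _ R] in auto)
  have "(\<lambda>n. \<Sum>m. R ^ m / fact m * \<bar>Cmoment_scaled a n (q * m) - a ^ (q * m)\<bar>)
      \<longlonglongrightarrow> (\<Sum>m. 0)"
    using tannerys_theorem[OF lim bound summable_exp_power_majorant] by simp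
  then show ?thesis unfolding Cexp_error_def by simp
qed

lemma norm_Cexp_sum_diff_le:
  assumes a: "a \<ge> 1" and n: "n > 0" and z: "norm z \<le> R"
  shows "norm (Cexp_sum a q n z - exp (z * of_real (a ^ q))) \<le> Cexp_error a q R n"
proof -
  define u where "u m = z ^ m / of_real (fact m) * of_real (Cmoment_scaled a n (q * m) - a ^ (q * m))" for m
  have sums: "u sums (Cexp_sum a q n z - exp (z * of_real (a ^ q)))"
    unfolding u_def of_real_diff right_diff_distrib
    by (intro sums_diff Cexp_sum_sums exp_mult_of_real_power_sums)
  have "R \<ge> 0" using z norm_ge_zero order.trans by blast
  then have "summable (\<lambda>m. R ^ m / fact m * \<bar>Cmoment_scaled a n (q * m) - a ^ (q * m)\<bar>)"
    using Cexp_error_term_le[OF a n]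
    by (intro summable_comparison_test[OF _ summable_exp_power_majorant[of R a q]] exI[of _ 0]) simp
  moreover have "norm (u m) \<le> R ^ m / fact m * \<bar>Cmoment_scaled a n (q * m) - a ^ (q * m)\<bar>" for m
    using z unfolding u_def norm_mult norm_divide norm_power norm_of_real
    by (auto intro!: mult_right_mono divide_right_mono power_mono)
  ultimately have "norm (suminf u) \<le> Cexp_error a q R n"
    unfolding Cexp_error_def by (intro norm_suminf_le)
  with sums show ?thesis by (simp add: sums_iff)
qed

lemma Cexp_sum_uniform_limit:
  assumes a: "a \<ge> 1" and f: "bounded (f ` K)"
  shows "uniform_limit K (\<lambda>n x. Cexp_sum a q n (f x)) (\<lambda>x. exp (f x * of_real (a ^ q))) sequentially"
proof (rule uniform_limitI)
  fix e :: real assume e: "e > 0"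
  obtain R where R: "R > 0" "\<And>x. x \<in> K \<Longrightarrow> norm (f x) \<le> R"
    using f unfolding bounded_pos by blast
  have "\<forall>\<^sub>F n in sequentially. Cexp_error a q R n < e"
    using Cexp_error_tendsto[OF a, of R q] R(1) e by (simp add: order_tendsto_iff)
  with eventually_gt_at_top[of 0]
  show "\<forall>\<^sub>F n in sequentially. \<forall>x\<in>K. dist (Cexp_sum a q n (f x)) (exp (f x * of_real (a ^ q))) < e"
  proof eventually_elim
    case (elim n)
    show ?case
    proof
      fix x assume "x \<in> K"
      then have "norm (Cexp_sum a q n (f x) - exp (f x * of_real (a ^ q))) \<le> Cexp_error a q R n"
        by (rule norm_Cexp_sum_diff_le[OF a elim(1) R(2)])
      with elim(2) show "dist (Cexp_sum a q n (f x)) (exp (f x * of_real (a ^ q))) < e"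
        by (simp add: dist_norm)
    qed
  qed
qed

theorem proposition2p4:
  fixes a hbar :: real and p :: "real ^ 'd"
  assumes "a > 1" and "hbar > 0"
  shows
   "((\<forall>x :: real ^ 'd.
       (\<lambda>n. \<Sum>k=0..n. complex_of_real (Ccoef k n a) *
           exp (\<i> * complex_of_real (p \<bullet> x / hbar) * complex_of_real (1 - 2 * real k / real n)))
       \<longlonglongrightarrow> exp (\<i> * complex_of_real (a * (p \<bullet> x) / hbar)))
    \<and> (\<forall>K :: (real ^ 'd) set. compact K \<longrightarrow>
       uniform_limit K
         (\<lambda>n x. \<Sum>k=0..n. complex_of_real (Ccoef k n a) *
           exp (\<i> * complex_of_real (p \<bullet> x / hbar) * complex_of_real (1 - 2 * real k / real n)))
         (\<lambda>x. exp (\<i> * complex_of_real (a * (p \<bullet> x) / hbar))) sequentially))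
   \<and> (\<forall>q::nat. q > 0 \<longrightarrow> even q \<longrightarrow>
    (\<forall>x :: real ^ 'd.
       (\<lambda>n. \<Sum>k=0..n. complex_of_real (Ccoef k n a) *
           exp (\<i> * complex_of_real (p \<bullet> x / hbar) * (- \<i>) ^ q * complex_of_real ((1 - 2 * real k / real n) ^ q)))
       \<longlonglongrightarrow> exp (\<i> * complex_of_real (p \<bullet> x) * (- \<i> * complex_of_real a) ^ q / complex_of_real hbar))
    \<and> (\<forall>K :: (real ^ 'd) set. compact K \<longrightarrow>
       uniform_limit K
         (\<lambda>n x. \<Sum>k=0..n. complex_of_real (Ccoef k n a) *
           exp (\<i> * complex_of_real (p \<bullet> x / hbar) * (- \<i>) ^ q * complex_of_real ((1 - 2 * real k / real n) ^ q)))
         (\<lambda>x. exp (\<i> * complex_of_real (p \<bullet> x) * (- \<i> * complex_of_real a) ^ q / complex_of_real hbar))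
         sequentially))
   \<and> (\<forall>q::nat. q > 0 \<longrightarrow> odd q \<longrightarrow>
    (\<forall>x :: real ^ 'd.
       (\<lambda>n. \<Sum>k=0..n. complex_of_real (Ccoef k n a) *
           exp (complex_of_real (p \<bullet> x / hbar) * (- \<i>) ^ q * complex_of_real ((1 - 2 * real k / real n) ^ q)))
       \<longlonglongrightarrow> exp (complex_of_real (p \<bullet> x) * (- \<i> * complex_of_real a) ^ q / complex_of_real hbar))
    \<and> (\<forall>K :: (real ^ 'd) set. compact K \<longrightarrow>
       uniform_limit K
         (\<lambda>n x. \<Sum>k=0..n. complex_of_real (Ccoef k n a) *
           exp (complex_of_real (p \<bullet> x / hbar) * (- \<i>) ^ q * complex_of_real ((1 - 2 * real k / real n) ^ q)))
         (\<lambda>x. exp (complex_of_real (p \<bullet> x) * (- \<i> * complex_of_real a) ^ q / complex_of_real hbar))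
         sequentially))"
proof -
  have a: "a \<ge> 1" using assms(1) by simp
  define f where "f c d x = c * complex_of_real (p \<bullet> x / hbar) * d" for c d :: complex and x
  have unif: "uniform_limit K (\<lambda>n x. Cexp_sum a q n (f c d x)) (\<lambda>x. exp (f c d x * of_real (a ^ q)))
      sequentially" if "compact K" for K c d q
  proof (rule Cexp_sum_uniform_limit[OF a])
    have "continuous_on K (f c d)" unfolding f_def using assms(2) by (intro continuous_intros) auto
    with that show "bounded (f c d ` K)" by (intro compact_imp_bounded compact_continuous_image)
  qed
  have lim: "(\<lambda>n. Cexp_sum a q n (f c d x)) \<longlonglongrightarrow> exp (f c d x * of_real (a ^ q))" for c d q x
    using unif[of "{x}" q c d] by simp
  have sum_a: "(\<Sum>k=0..n. complex_of_real (Ccoef k n a) *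
      exp (\<i> * complex_of_real (p \<bullet> x / hbar) * complex_of_real (1 - 2 * real k / real n)))
      = Cexp_sum a 1 n (f \<i> 1 x)" for n x
    by (simp add: f_def Cexp_sum_def)
  have exp_a: "exp (\<i> * complex_of_real (a * (p \<bullet> x) / hbar)) = exp (f \<i> 1 x * of_real (a ^ 1))" for x
    by (simp add: f_def mult_ac)
  have sum_b: "(\<Sum>k=0..n. complex_of_real (Ccoef k n a) *
      exp (\<i> * complex_of_real (p \<bullet> x / hbar) * (- \<i>) ^ q * complex_of_real ((1 - 2 * real k / real n) ^ q)))
      = Cexp_sum a q n (f \<i> ((- \<i>) ^ q) x)" for n q x
    by (simp add: f_def Cexp_sum_def)
  have exp_b: "exp (\<i> * complex_of_real (p \<bullet> x) * (- \<i> * complex_of_real a) ^ q / complex_of_real hbar)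
      = exp (f \<i> ((- \<i>) ^ q) x * of_real (a ^ q))" for q x
    unfolding power_mult_distrib f_def by (simp add: mult_ac)
  have sum_c: "(\<Sum>k=0..n. complex_of_real (Ccoef k n a) *
      exp (complex_of_real (p \<bullet> x / hbar) * (- \<i>) ^ q * complex_of_real ((1 - 2 * real k / real n) ^ q)))
      = Cexp_sum a q n (f 1 ((- \<i>) ^ q) x)" for n q x
    by (simp add: f_def Cexp_sum_def)
  have exp_c: "exp (complex_of_real (p \<bullet> x) * (- \<i> * complex_of_real a) ^ q / complex_of_real hbar)
      = exp (f 1 ((- \<i>) ^ q) x * of_real (a ^ q))" for q x
    unfolding power_mult_distrib f_def by (simp add: mult_ac)
  show ?thesis
    unfolding sum_a exp_a sum_b exp_b sum_c exp_c by (intro conjI allI impI unif lim)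
qed

end
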